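(* Let $\mu,\mu_2$ be the first and second moments of some probability distribution on $[0,1]$, and set $\sigma^2=\mu_2-\mu^2$. Let $\mathcal{D}$ be the set of probability distributions on $[0,1]$ with $E(X)=\mu$ and $E(X^2)=\mu_2$. For a distribution $F$ write $F(x)=P(X\le x)$ and $F_{-}(x)=P(X<x)$ for $X\sim F$. Fix $x\in(0,1)$ and define $\mu_2^*$ as follows: - if $x\le\mu$, let $F_1$ be the distribution on $\{x,1\}$ with $P(X=x)=(1-\mu)/(1-x)$ and $P(X=1)=1-(1-\mu)/(1-x)$; $\mu_2^*$ is its second moment, with variance $\sigma_*^2=(1-\mu)(\mu-x)$; - if $x>\mu$, let $F_2$ be the distribution on $\{0,x\}$ with $P(X=x)=\mu/x$ and $P(X=0)=1-\mu/x$; $\mu_2^*$ is its second moment, with variance $\sigma_*^2=x(x-\mu)$. Suppose $\mu_2\ge\mu_2^*$. Let $F_4$ be the distribution supported on $\{0,x,1\}$ satisfying both moment constraints. Its masses are $$P(X=x)=p_4=\frac{\mu-\mu_2}{x-x^2},\qquad P(X=1)=\mu-xp_4,\qquad P(X=0)=1-p_4-P(X=1).$$ Then for every $G\in\mathcal{D}$ we have $G(x)\le F_4(x)$ and $G_{-}(x)\ge F_{4-}(x)$. That is, $F_4$ maximizes $F(x)$ and minimizes $F_{-}(x)$ subject to the moment constraints.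
   Context: This setting models a single histogram bucket rescaled to $[0,1]$, for which the mean $\mu$ and the second moment $\mu_2$ of the observations in the bucket are known. *)

theory Defs
  imports "HOL-Probability.Probability"
begin

definition moment_class :: "real \<Rightarrow> real \<Rightarrow> real measure set" where
  "moment_class mu mu2 = {M. prob_space M \<and> sets M = sets borel \<and>
      (AE t in M. t \<in> {0..1}) \<and>
      integrable M (\<lambda>t. t) \<and> (\<integral>t. t \<partial>M) = mu \<and>
      integrable M (\<lambda>t. t^2) \<and> (\<integral>t. t^2 \<partial>M) = mu2}"

definition F1_mass_x :: "real \<Rightarrow> real \<Rightarrow> real" where
  "F1_mass_x mu x = (1 - mu) / (1 - x)"
definition F1_mass_1 :: "real \<Rightarrow> real \<Rightarrow> real" where
  "F1_mass_1 mu x = 1 - (1 - mu) / (1 - x)"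
definition F2_mass_x :: "real \<Rightarrow> real \<Rightarrow> real" where
  "F2_mass_x mu x = mu / x"
definition F2_mass_0 :: "real \<Rightarrow> real \<Rightarrow> real" where
  "F2_mass_0 mu x = 1 - mu / x"

definition mu2_star :: "real \<Rightarrow> real \<Rightarrow> real" where
  "mu2_star mu x = (if x \<le> mu
      then F1_mass_x mu x * x^2 + F1_mass_1 mu x * 1^2
      else F2_mass_0 mu x * 0^2 + F2_mass_x mu x * x^2)"

definition p4 :: "real \<Rightarrow> real \<Rightarrow> real \<Rightarrow> real" where
  "p4 mu mu2 x = (mu - mu2) / (x - x^2)"
definition F4_mass_1 :: "real \<Rightarrow> real \<Rightarrow> real \<Rightarrow> real" where
  "F4_mass_1 mu mu2 x = mu - x * p4 mu mu2 x"
definition F4_mass_0 :: "real \<Rightarrow> real \<Rightarrow> real \<Rightarrow> real" where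
  "F4_mass_0 mu mu2 x = 1 - p4 mu mu2 x - F4_mass_1 mu mu2 x"

definition F4_cdf :: "real \<Rightarrow> real \<Rightarrow> real \<Rightarrow> real \<Rightarrow> real" where
  "F4_cdf mu mu2 x t =
     (if 0 \<le> t then F4_mass_0 mu mu2 x else 0) +
     (if x \<le> t then p4 mu mu2 x else 0) +
     (if 1 \<le> t then F4_mass_1 mu mu2 x else 0)"
definition F4_cdf_left :: "real \<Rightarrow> real \<Rightarrow> real \<Rightarrow> real \<Rightarrow> real" where
  "F4_cdf_left mu mu2 x t =
     (if 0 < t then F4_mass_0 mu mu2 x else 0) +
     (if x < t then p4 mu mu2 x else 0) +
     (if 1 < t then F4_mass_1 mu mu2 x else 0)"

end

theory Submission
  imports Defs
begin

text \<open>Both bounds come from quadratic polynomials that dominate (resp. are dominated by) the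
indicator of \<open>{..x}\<close> (resp. \<open>{..<x}\<close>) on [0,1] and agree with it at 0, x and 1:
\<open>q t = 1 - t (t - x) / (1 - x)\<close> and \<open>r t = 1 - t (1 + x - t) / x\<close>. Integrating against any G
with the prescribed moments gives \<open>G(x) \<le> E q\<close> and \<open>G\<^sub>-(x) \<ge> E r\<close>, and these expectations depend
only on \<open>\<mu>\<close> and \<open>\<mu>\<^sub>2\<close>; since q and r are exact on the support {0, x, 1} of F4, they equal
\<open>F4(x)\<close> and \<open>F4\<^sub>-(x)\<close>.\<close>

lemma (in finite_measure) measure_le_integral_of_indicator_le:
  assumes "A \<in> sets M" "integrable M f" "AE t in M. indicator A t \<le> f t"
  shows "measure M A \<le> (\<integral>t. f t \<partial>M)"
proof -
  have "(\<integral>t. indicator A t \<partial>M) \<le> (\<integral>t. f t \<partial>M)"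
    using assms by (intro integral_mono_AE) (auto simp: integrable_indicator_iff less_top[symmetric])
  then show ?thesis
    using assms(1) by simp
qed

lemma (in finite_measure) integral_le_measure_of_le_indicator:
  assumes "A \<in> sets M" "integrable M f" "AE t in M. f t \<le> indicator A t"
  shows "(\<integral>t. f t \<partial>M) \<le> measure M A"
proof -
  have "(\<integral>t. f t \<partial>M) \<le> (\<integral>t. indicator A t \<partial>M)"
    using assms by (intro integral_mono_AE) (auto simp: integrable_indicator_iff less_top[symmetric])
  then show ?thesis
    using assms(1) by simp
qed

lemma moment_class_integrable_quadratic:
  assumes "G \<in> moment_class mu mu2"
  shows "integrable G (\<lambda>t. a + b * t + c * t^2)"
proof -
  interpret prob_space G
    using assms by (simp add: moment_class_def)
  show ?thesis
    using assms by (auto simp: moment_class_def)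
qed

lemma moment_class_integral_quadratic:
  assumes "G \<in> moment_class mu mu2"
  shows "(\<integral>t. a + b * t + c * t^2 \<partial>G) = a + b * mu + c * mu2"
proof -
  interpret prob_space G
    using assms by (simp add: moment_class_def)
  show ?thesis
    using assms by (auto simp: moment_class_def prob_space)
qed

lemma indicator_atMost_le_quadratic:
  fixes x t :: real
  assumes "x < 1" "t \<in> {0..1}"
  shows "indicator {..x} t \<le> 1 + x / (1 - x) * t + (- 1 / (1 - x)) * t^2"
proof -
  have q: "1 + x / (1 - x) * t + (- 1 / (1 - x)) * t^2 = 1 - t * (t - x) / (1 - x)"
    using assms(1) by (simp add: diff_divide_distrib add_divide_distrib power2_eq_square algebra_simps)
  show ?thesis
  proof (cases "t \<le> x")
    case True
    then have "t * (t - x) \<le> 0"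
      using assms(2) by (simp add: mult_nonneg_nonpos)
    then show ?thesis
      unfolding q using True assms(1) by (simp add: divide_nonpos_pos)
  next
    case False
    then have "t * (t - x) \<le> 1 * (1 - x)"
      using assms(2) by (intro mult_mono) auto
    then show ?thesis
      unfolding q using False assms(1) by (simp add: divide_le_eq)
  qed
qed

lemma quadratic_le_indicator_lessThan:
  fixes x t :: real
  assumes "0 < x" "t \<in> {0..1}"
  shows "1 + (- (1 + x) / x) * t + 1 / x * t^2 \<le> indicator {..<x} t"
proof -
  have r: "1 + (- (1 + x) / x) * t + 1 / x * t^2 = 1 - t * (1 + x - t) / x"
    using assms(1) by (simp add: field_simps power2_eq_square)
  show ?thesis
  proof (cases "t < x")
    case True
    then have "0 \<le> t * (1 + x - t)"
      using assms(2) by simp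
    then show ?thesis
      unfolding r using True assms(1) by simp
  next
    case False
    then have "0 \<le> (t - x) * (1 - t)"
      using assms(2) by simp
    then have "x \<le> t * (1 + x - t)"
      by (simp add: algebra_simps)
    then show ?thesis
      unfolding r using False assms(1) by (simp add: le_divide_eq)
  qed
qed

lemma moment_class_measure_atMost_le:
  assumes G: "G \<in> moment_class mu mu2" and "x < 1"
  shows "measure G {..x} \<le> 1 + x / (1 - x) * mu + (- 1 / (1 - x)) * mu2"
proof -
  interpret prob_space G
    using G by (simp add: moment_class_def)
  have "AE t in G. t \<in> {0..1}" and "sets G = sets borel"
    using G by (simp_all add: moment_class_def)
  moreover from this(1) have
    "AE t in G. indicator {..x} t \<le> 1 + x / (1 - x) * t + (- 1 / (1 - x)) * t^2"
    by eventually_elim (rule indicator_atMost_le_quadratic[OF \<open>x < 1\<close>])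
  ultimately have "measure G {..x} \<le> (\<integral>t. 1 + x / (1 - x) * t + (- 1 / (1 - x)) * t^2 \<partial>G)"
    by (intro measure_le_integral_of_indicator_le moment_class_integrable_quadratic[OF G]) simp_all
  then show ?thesis
    by (simp only: moment_class_integral_quadratic[OF G])
qed

lemma moment_class_measure_lessThan_ge:
  assumes G: "G \<in> moment_class mu mu2" and "0 < x"
  shows "1 + (- (1 + x) / x) * mu + 1 / x * mu2 \<le> measure G {..<x}"
proof -
  interpret prob_space G
    using G by (simp add: moment_class_def)
  have "AE t in G. t \<in> {0..1}" and "sets G = sets borel"
    using G by (simp_all add: moment_class_def)
  moreover from this(1) have
    "AE t in G. 1 + (- (1 + x) / x) * t + 1 / x * t^2 \<le> indicator {..<x} t"
    by eventually_elim (rule quadratic_le_indicator_lessThan[OF \<open>0 < x\<close>])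
  ultimately have "(\<integral>t. 1 + (- (1 + x) / x) * t + 1 / x * t^2 \<partial>G) \<le> measure G {..<x}"
    by (intro integral_le_measure_of_le_indicator moment_class_integrable_quadratic[OF G]) simp_all
  then show ?thesis
    by (simp only: moment_class_integral_quadratic[OF G])
qed

lemma mult_p4_eq:
  assumes "0 < x" "x < 1"
  shows "x * p4 mu mu2 x = (mu - mu2) / (1 - x)" "(1 - x) * p4 mu mu2 x = (mu - mu2) / x"
proof -
  have "x - x^2 = x * (1 - x)"
    by (simp add: power2_eq_square algebra_simps)
  with assms show "x * p4 mu mu2 x = (mu - mu2) / (1 - x)" "(1 - x) * p4 mu mu2 x = (mu - mu2) / x"
    unfolding p4_def by simp_all
qed

lemma F4_cdf_self:
  assumes "0 < x" "x < 1"
  shows "F4_cdf mu mu2 x x = 1 + x / (1 - x) * mu + (- 1 / (1 - x)) * mu2"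
proof -
  have "1 - x \<noteq> 0"
    using assms(2) by simp
  have "F4_cdf mu mu2 x x = 1 - mu + x * p4 mu mu2 x"
    using assms unfolding F4_cdf_def F4_mass_0_def F4_mass_1_def by simp
  also have "\<dots> = 1 - mu * (1 - x) / (1 - x) + (mu - mu2) / (1 - x)"
    using assms \<open>1 - x \<noteq> 0\<close> by (simp add: mult_p4_eq)
  also have "\<dots> = 1 + x / (1 - x) * mu + (- 1 / (1 - x)) * mu2"
    by (simp add: add_divide_distrib diff_divide_distrib algebra_simps)
  finally show ?thesis .
qed

lemma F4_cdf_left_self:
  assumes "0 < x" "x < 1"
  shows "F4_cdf_left mu mu2 x x = 1 + (- (1 + x) / x) * mu + 1 / x * mu2"
proof -
  have "F4_cdf_left mu mu2 x x = 1 - mu - (1 - x) * p4 mu mu2 x"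
    using assms unfolding F4_cdf_left_def F4_mass_0_def F4_mass_1_def by (simp add: algebra_simps)
  also have "\<dots> = 1 - mu * x / x - (mu - mu2) / x"
    using assms by (simp add: mult_p4_eq)
  also have "\<dots> = 1 + (- (1 + x) / x) * mu + 1 / x * mu2"
    by (simp add: add_divide_distrib diff_divide_distrib algebra_simps)
  finally show ?thesis .
qed

theorem mainTheorem3:
  fixes mu mu2 x :: real
  assumes "moment_class mu mu2 \<noteq> {}"
    and "0 < x" and "x < 1"
    and "mu2 \<ge> mu2_star mu x"
  shows "\<forall>G \<in> moment_class mu mu2.
           measure G {..x} \<le> F4_cdf mu mu2 x x \<and>
           measure G {..<x} \<ge> F4_cdf_left mu mu2 x x"
proof
  fix G
  assume G: "G \<in> moment_class mu mu2"
  show "measure G {..x} \<le> F4_cdf mu mu2 x x \<and> measure G {..<x} \<ge> F4_cdf_left mu mu2 x x"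
    unfolding F4_cdf_self[OF assms(2,3)] F4_cdf_left_self[OF assms(2,3)]
    using moment_class_measure_atMost_le[OF G assms(3)] moment_class_measure_lessThan_ge[OF G assms(2)]
    by blast
qed

end
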